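(* Any tabular RL algorithm $\mathscr{A}$ with sample complexity $\mathcal{C}(\epsilon,\delta)$ is $\epsilon/(4H)$-robust with sample complexity $\mathcal{C}(\epsilon/2,\delta)$.
   Context: Tabular episodic MDP (finite $\mathcal{S},\mathcal{A}$) with horizon $H$ and per-step reward $r(s,a)$; value $V^{\pi,r}=\mathbb{E}_\pi[\sum_{h=1}^H r(s_h,a_h)]$; $\pi$ is $\epsilon$-optimal if $V^{\pi,r}\ge\max_{\pi'}V^{\pi',r}-\epsilon$. An RL algorithm has sample complexity $\mathcal{C}(\epsilon,\delta)$ if for any reward function it outputs an $\epsilon$-optimal policy using $\mathcal{C}(\epsilon,\delta)$ episodes with probability at least $1-\delta$. It is $g(\epsilon)$-robust with sample complexity $\mathcal{C}(\epsilon,\delta)$ if it outputs a policy that is $\epsilon$-optimal for $r$ using $\mathcal{C}(\epsilon,\delta)$ samples with probability at least $1-\delta$ even when the rewards it observes are those of a perturbed reward $r+\varepsilon$ with $\|\varepsilon\|_\infty\le g(\epsilon)$ (the perturbation being a fixed function of the state–action pair). *)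

theory Defs
  imports "HOL-Probability.Probability"
begin

text \<open>Tabular episodic MDP: horizon H, initial-state distribution, (step-dependent)
  transition kernel. Steps are numbered 1..H.\<close>
record ('s, 'a) mdp =
  horizon :: nat
  init_dist :: "'s pmf"
  trans :: "nat \<Rightarrow> 's \<Rightarrow> 'a \<Rightarrow> 's pmf"

type_synonym ('s, 'a) policy = "nat \<Rightarrow> 's \<Rightarrow> 'a pmf"

type_synonym ('s, 'a) reward = "'s \<Rightarrow> 'a \<Rightarrow> real"

fun vrec :: "('s, 'a) mdp \<Rightarrow> ('s, 'a) policy \<Rightarrow> ('s, 'a) reward \<Rightarrow> nat \<Rightarrow> nat \<Rightarrow> 's \<Rightarrow> real" where
  "vrec M \<pi> r 0 h s = 0"
| "vrec M \<pi> r (Suc k) h s =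
     measure_pmf.expectation (\<pi> h s)
       (\<lambda>a. r s a + measure_pmf.expectation (trans M h s a) (\<lambda>s'. vrec M \<pi> r k (Suc h) s'))"

definition pvalue :: "('s, 'a) mdp \<Rightarrow> ('s, 'a) policy \<Rightarrow> ('s, 'a) reward \<Rightarrow> real" where
  "pvalue M \<pi> r = measure_pmf.expectation (init_dist M) (\<lambda>s. vrec M \<pi> r (horizon M) 1 s)"

definition opt_value :: "('s, 'a) mdp \<Rightarrow> ('s, 'a) reward \<Rightarrow> real" where
  "opt_value M r = (SUP \<pi>. pvalue M \<pi> r)"

definition eps_optimal :: "('s, 'a) mdp \<Rightarrow> ('s, 'a) reward \<Rightarrow> real \<Rightarrow> ('s, 'a) policy \<Rightarrow> bool" where
  "eps_optimal M r \<epsilon> \<pi> \<longleftrightarrow> pvalue M \<pi> r \<ge> opt_value M r - \<epsilon>"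

text \<open>A general randomized online RL algorithm with internal memory of type 'm.
  Within an episode, the action at step h may depend on the memory, the step, the
  partial trajectory of the current episode (state, action, observed reward triples)
  and the current state.\<close>
record ('s, 'a, 'm) rl_alg =
  alg_init :: "'m pmf"
  alg_act :: "'m \<Rightarrow> nat \<Rightarrow> ('s \<times> 'a \<times> real) list \<Rightarrow> 's \<Rightarrow> 'a pmf"
  alg_update :: "'m \<Rightarrow> ('s \<times> 'a \<times> real) list \<Rightarrow> 'm pmf"
  alg_output :: "'m \<Rightarrow> ('s, 'a) policy pmf"

fun gen_steps :: "('s, 'a) mdp \<Rightarrow> ('s, 'a, 'm) rl_alg \<Rightarrow> ('s, 'a) reward \<Rightarrow> 'm \<Rightarrow> nat \<Rightarrow> nat
    \<Rightarrow> ('s \<times> 'a \<times> real) list \<Rightarrow> 's \<Rightarrow> ('s \<times> 'a \<times> real) list pmf" where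
  "gen_steps M A ro m 0 h tr s = return_pmf tr"
| "gen_steps M A ro m (Suc k) h tr s =
     bind_pmf (alg_act A m h tr s) (\<lambda>a.
     bind_pmf (trans M h s a) (\<lambda>s'.
     gen_steps M A ro m k (Suc h) (tr @ [(s, a, ro s a)]) s'))"

definition episode :: "('s, 'a) mdp \<Rightarrow> ('s, 'a, 'm) rl_alg \<Rightarrow> ('s, 'a) reward \<Rightarrow> 'm
    \<Rightarrow> ('s \<times> 'a \<times> real) list pmf" where
  "episode M A ro m = bind_pmf (init_dist M) (\<lambda>s. gen_steps M A ro m (horizon M) 1 [] s)"

fun run_mem :: "('s, 'a) mdp \<Rightarrow> ('s, 'a, 'm) rl_alg \<Rightarrow> ('s, 'a) reward \<Rightarrow> nat \<Rightarrow> 'm pmf" where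
  "run_mem M A ro 0 = alg_init A"
| "run_mem M A ro (Suc n) =
     bind_pmf (run_mem M A ro n) (\<lambda>m. bind_pmf (episode M A ro m) (\<lambda>ep. alg_update A m ep))"

definition run_output :: "('s, 'a) mdp \<Rightarrow> ('s, 'a, 'm) rl_alg \<Rightarrow> ('s, 'a) reward \<Rightarrow> nat
    \<Rightarrow> ('s, 'a) policy pmf" where
  "run_output M A ro n = bind_pmf (run_mem M A ro n) (alg_output A)"

definition has_sample_complexity ::
    "('s, 'a) mdp \<Rightarrow> (real \<Rightarrow> real \<Rightarrow> ('s, 'a, 'm) rl_alg) \<Rightarrow> (real \<Rightarrow> real \<Rightarrow> nat) \<Rightarrow> bool" where
  "has_sample_complexity M Alg C \<longleftrightarrow>
     (\<forall>\<epsilon> \<delta> (r :: ('s, 'a) reward). \<epsilon> > 0 \<longrightarrow> 0 < \<delta> \<longrightarrow> \<delta> < 1 \<longrightarrow>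
        measure_pmf.prob (run_output M (Alg \<epsilon> \<delta>) r (C \<epsilon> \<delta>)) {\<pi>. eps_optimal M r \<epsilon> \<pi>} \<ge> 1 - \<delta>)"

definition is_robust ::
    "('s, 'a) mdp \<Rightarrow> (real \<Rightarrow> real \<Rightarrow> ('s, 'a, 'm) rl_alg) \<Rightarrow> (real \<Rightarrow> real) \<Rightarrow> (real \<Rightarrow> real \<Rightarrow> nat) \<Rightarrow> bool" where
  "is_robust M Alg g C \<longleftrightarrow>
     (\<forall>\<epsilon> \<delta> (r :: ('s, 'a) reward) (e :: ('s, 'a) reward). \<epsilon> > 0 \<longrightarrow> 0 < \<delta> \<longrightarrow> \<delta> < 1 \<longrightarrow>
        (\<forall>s a. \<bar>e s a\<bar> \<le> g \<epsilon>) \<longrightarrow>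
        measure_pmf.prob (run_output M (Alg \<epsilon> \<delta>) (\<lambda>s a. r s a + e s a) (C \<epsilon> \<delta>))
          {\<pi>. eps_optimal M r \<epsilon> \<pi>} \<ge> 1 - \<delta>)"

end

theory Submission
  imports Defs
begin

text \<open>Values are linear in the reward, and a reward perturbation bounded by \<open>\<epsilon>/(4H)\<close>
  changes every value, hence also the optimal value, by at most \<open>\<epsilon>/4\<close>. So an
  \<open>\<epsilon>/2\<close>-optimal policy for the observed reward \<open>r + e\<close> is
  \<open>\<epsilon>/2 + 2\<cdot>\<epsilon>/4 = \<epsilon>\<close>-optimal for \<open>r\<close>, and running the algorithm with accuracy \<open>\<epsilon>/2\<close>
  on the observed rewards succeeds with the original confidence.\<close>

lemma abs_expectation_pmf_le:
  fixes f :: "'x \<Rightarrow> real"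
  assumes "\<And>x. \<bar>f x\<bar> \<le> c"
  shows "\<bar>measure_pmf.expectation p f\<bar> \<le> c"
proof -
  have "integrable p f"
    using assms by (intro measure_pmf.integrable_const_bound[where B = c]) auto
  then have "measure_pmf.expectation p (\<lambda>x. \<bar>f x\<bar>) \<le> c"
    using assms by (intro measure_pmf.integral_le_const) auto
  then show ?thesis
    using integral_abs_bound[of p f] by linarith
qed

context
  fixes M :: "('s :: finite, 'a :: finite) mdp"
begin

lemma vrec_add:
  "vrec M \<pi> (\<lambda>s a. r s a + e s a) k h s = vrec M \<pi> r k h s + vrec M \<pi> e k h s"
proof (induction k arbitrary: h s)
  case 0
  then show ?case by simp
next
  case (Suc k)
  have "vrec M \<pi> (\<lambda>s a. r s a + e s a) k (Suc h) =
          (\<lambda>s'. vrec M \<pi> r k (Suc h) s' + vrec M \<pi> e k (Suc h) s')"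
    using Suc.IH by auto
  then show ?case
    by (simp add: integrable_measure_pmf_finite)
qed

lemma abs_vrec_le:
  assumes "\<And>s a. \<bar>e s a\<bar> \<le> c"
  shows "\<bar>vrec M \<pi> e k h s\<bar> \<le> real k * c"
proof (induction k arbitrary: h s)
  case 0
  then show ?case by simp
next
  case (Suc k)
  have "\<bar>e s a + measure_pmf.expectation (trans M h s a) (vrec M \<pi> e k (Suc h))\<bar>
          \<le> real (Suc k) * c" for a
  proof -
    have "\<bar>measure_pmf.expectation (trans M h s a) (vrec M \<pi> e k (Suc h))\<bar> \<le> real k * c"
      by (rule abs_expectation_pmf_le) (rule Suc.IH)
    then show ?thesis
      using assms[of s a] by (simp add: distrib_right)
  qed
  then show ?case
    by (simp only: vrec.simps) (rule abs_expectation_pmf_le)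
qed

lemma pvalue_add:
  "pvalue M \<pi> (\<lambda>s a. r s a + e s a) = pvalue M \<pi> r + pvalue M \<pi> e"
  unfolding pvalue_def vrec_add
  by (simp add: integrable_measure_pmf_finite)

lemma abs_pvalue_le:
  assumes "\<And>s a. \<bar>e s a\<bar> \<le> c"
  shows "\<bar>pvalue M \<pi> e\<bar> \<le> real (horizon M) * c"
  unfolding pvalue_def by (rule abs_expectation_pmf_le) (rule abs_vrec_le[OF assms])

lemma abs_pvalue_le_per_step:
  assumes "0 \<le> c" and "\<And>s a. \<bar>e s a\<bar> \<le> c / real (horizon M)"
  shows "\<bar>pvalue M \<pi> e\<bar> \<le> c"
proof -
  have "\<bar>pvalue M \<pi> e\<bar> \<le> real (horizon M) * (c / real (horizon M))"
    using assms(2) by (rule abs_pvalue_le)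
  also have "\<dots> \<le> c"
    using assms(1) by (cases "horizon M = 0") auto
  finally show ?thesis .
qed

lemma bdd_above_pvalue: "bdd_above (range (\<lambda>\<pi>. pvalue M \<pi> r))"
proof -
  define c where "c = Max (range (\<lambda>(s, a). \<bar>r s a\<bar>))"
  have "\<bar>r s a\<bar> \<le> c" for s a
    unfolding c_def by (rule Max_ge) auto
  then have "\<bar>pvalue M \<pi> r\<bar> \<le> real (horizon M) * c" for \<pi>
    by (rule abs_pvalue_le)
  then show ?thesis
    by (intro bdd_aboveI[where M = "real (horizon M) * c"]) (auto simp: abs_le_iff)
qed

lemma opt_value_le_perturbed:
  assumes "\<And>\<pi>. \<bar>pvalue M \<pi> e\<bar> \<le> c"
  shows "opt_value M r \<le> opt_value M (\<lambda>s a. r s a + e s a) + c"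
  unfolding opt_value_def
proof (rule cSUP_least)
  fix \<pi>
  have "pvalue M \<pi> (\<lambda>s a. r s a + e s a) \<le> (SUP \<pi>. pvalue M \<pi> (\<lambda>s a. r s a + e s a))"
    by (rule cSUP_upper) (auto intro: bdd_above_pvalue)
  then show "pvalue M \<pi> r \<le> (SUP \<pi>. pvalue M \<pi> (\<lambda>s a. r s a + e s a)) + c"
    using assms[of \<pi>] pvalue_add[of \<pi> r e] by linarith
qed simp

lemma eps_optimal_of_perturbed:
  assumes "\<And>\<pi>. \<bar>pvalue M \<pi> e\<bar> \<le> c"
    and "eps_optimal M (\<lambda>s a. r s a + e s a) \<epsilon> \<pi>"
  shows "eps_optimal M r (\<epsilon> + 2 * c) \<pi>"
  using assms(1)[of \<pi>] assms(2) opt_value_le_perturbed[OF assms(1), of r] pvalue_add[of \<pi> r e]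
  unfolding eps_optimal_def by linarith

end

theorem lemma6:
  fixes M :: "('s :: finite, 'a :: finite) mdp"
    and Alg :: "real \<Rightarrow> real \<Rightarrow> ('s, 'a, 'm) rl_alg"
    and C :: "real \<Rightarrow> real \<Rightarrow> nat"
  assumes "has_sample_complexity M Alg C"
  shows "is_robust M (\<lambda>\<epsilon> \<delta>. Alg (\<epsilon> / 2) \<delta>) (\<lambda>\<epsilon>. \<epsilon> / (4 * real (horizon M)))
           (\<lambda>\<epsilon> \<delta>. C (\<epsilon> / 2) \<delta>)"
  unfolding is_robust_def
proof (intro allI impI)
  fix \<epsilon> \<delta> :: real and r e :: "('s, 'a) reward"
  assume "\<epsilon> > 0" "0 < \<delta>" "\<delta> < 1" and e_le: "\<forall>s a. \<bar>e s a\<bar> \<le> \<epsilon> / (4 * real (horizon M))"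
  let ?r' = "\<lambda>s a. r s a + e s a"
  let ?P = "run_output M (Alg (\<epsilon> / 2) \<delta>) ?r' (C (\<epsilon> / 2) \<delta>)"
  have "\<bar>pvalue M \<pi> e\<bar> \<le> \<epsilon> / 4" for \<pi>
    using \<open>\<epsilon> > 0\<close> e_le by (intro abs_pvalue_le_per_step) (auto simp: field_simps)
  then have "{\<pi>. eps_optimal M ?r' (\<epsilon> / 2) \<pi>} \<subseteq> {\<pi>. eps_optimal M r \<epsilon> \<pi>}"
    using eps_optimal_of_perturbed[of M e "\<epsilon> / 4" r "\<epsilon> / 2"] by auto
  then have "measure_pmf.prob ?P {\<pi>. eps_optimal M ?r' (\<epsilon> / 2) \<pi>}
               \<le> measure_pmf.prob ?P {\<pi>. eps_optimal M r \<epsilon> \<pi>}"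
    by (rule measure_pmf.finite_measure_mono) simp
  moreover have "1 - \<delta> \<le> measure_pmf.prob ?P {\<pi>. eps_optimal M ?r' (\<epsilon> / 2) \<pi>}"
    using assms \<open>\<epsilon> > 0\<close> \<open>0 < \<delta>\<close> \<open>\<delta> < 1\<close> unfolding has_sample_complexity_def by auto
  ultimately show "1 - \<delta> \<le> measure_pmf.prob ?P {\<pi>. eps_optimal M r \<epsilon> \<pi>}"
    by linarith
qed

end
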